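(* Let $(V,E)$ be a finite graph and $p\in[0,1]$. Define rates on $\{0,1\}^E\times\{-1,1\}^V$ as follows: (a) if $\sigma'=\sigma$ and there is $e\in E$ with $\eta'=\eta^e$ and $\gamma_\eta(e)=1$, then $c((\eta,\sigma),(\eta',\sigma'))=\big((1-p)\mathbf 1_{\eta(e)=1}+p\mathbf 1_{\eta(e)=0}\big)\mathbf 1_{(\eta,\sigma)\in\mathcal C}$; (b) if $\sigma'=\sigma$ and there is $e\in E$ with $\eta'=\eta^e$, $\gamma_\eta(e)=0$ and $\delta_\sigma(e)=1$, then $c((\eta,\sigma),(\eta',\sigma'))=\frac12\big((1-p)\mathbf 1_{\eta(e)=1}+p\mathbf 1_{\eta(e)=0}\big)\mathbf 1_{(\eta,\sigma)\in\mathcal C}$; (c) if there are $x\in V$ and $e\in E_x$ with $\eta'=\eta^e$, $\gamma_\eta(e)=0$, $\eta(e)=\delta_\sigma(e)$, and $\sigma'(y)=-\sigma(y)$ for the vertices $y$ connected to $x$ by an open path of $\eta$ not using $e$ (including $y=x$), $\sigma'(y)=\sigma(y)$ otherwise, then $c((\eta,\sigma),(\eta',\sigma'))=\frac14\big((1-p)\mathbf 1_{\eta(e)=1}\mathbf 1_{(\eta,\sigma)\in\mathcal C}+p\mathbf 1_{\eta(e)=0}\mathbf 1_{(\eta',\sigma')\in\mathcal C}\big)$; (d) all other off-diagonal rates are $0$. Let $\eta\in\{0,1\}^E$, $e\in E$ and $\sigma\in\{-1,1\}^V$ with $(\eta,\sigma)\in\mathcal C$. Then, with sums over $\sigma'\in\{-1,1\}^V$: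 if $\gamma_\eta(e)=1$, $\sum_{\sigma'}c((\eta,\sigma),(\eta^e,\sigma'))=p\mathbf 1_{\eta(e)=0}+(1-p)\mathbf 1_{\eta(e)=1}$; if $\gamma_\eta(e)=0$ and $\eta(e)=0$, the sum equals $p/2$; if $\gamma_\eta(e)=0$ and $\eta(e)=1$, the sum equals $1-p$.
   Context: Edge configurations $\eta\in\{0,1\}^E$ (1 = open), spin configurations $\sigma\in\{-1,1\}^V$. For $e=\langle x,y\rangle$, $\delta_\sigma(e)=\mathbf 1_{\sigma(x)=\sigma(y)}$. $\mathcal C=\{(\eta,\sigma):\eta(e)\le\delta_\sigma(e)\ \forall e\in E\}$. $E_x$ is the set of edges with endvertex $x$; $\eta^e$ is $\eta$ with the value at $e$ changed. For $e=\langle x,y\rangle$, $\gamma_\eta(e)=1$ if $x,y$ are connected by a path of open edges of $\eta$ not using $e$, and $0$ otherwise. *)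

theory Defs
  imports Complex_Main "HOL-Library.FuncSet"
begin

definition simple_graph :: "'v set \<Rightarrow> 'v set set \<Rightarrow> bool" where
  "simple_graph V E \<longleftrightarrow> finite V \<and> (\<forall>e\<in>E. e \<subseteq> V \<and> card e = 2)"

definition edge_configs :: "'v set set \<Rightarrow> ('v set \<Rightarrow> nat) set" where
  "edge_configs E = (E \<rightarrow>\<^sub>E {0, 1})"

definition spin_configs :: "'v set \<Rightarrow> ('v \<Rightarrow> int) set" where
  "spin_configs V = (V \<rightarrow>\<^sub>E {-1, 1})"

definition delta :: "('v \<Rightarrow> int) \<Rightarrow> 'v set \<Rightarrow> nat" where
  "delta \<sigma> e = (if \<forall>x\<in>e. \<forall>y\<in>e. \<sigma> x = \<sigma> y then 1 else 0)"

definition compatible :: "'v set set \<Rightarrow> ('v set \<Rightarrow> nat) \<Rightarrow> ('v \<Rightarrow> int) \<Rightarrow> bool" where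
  "compatible E \<eta> \<sigma> \<longleftrightarrow> (\<forall>e\<in>E. \<eta> e \<le> delta \<sigma> e)"

definition flip_edge :: "('v set \<Rightarrow> nat) \<Rightarrow> 'v set \<Rightarrow> ('v set \<Rightarrow> nat)" where
  "flip_edge \<eta> e = \<eta>(e := 1 - \<eta> e)"

definition open_adj_avoiding :: "'v set set \<Rightarrow> ('v set \<Rightarrow> nat) \<Rightarrow> 'v set \<Rightarrow> 'v \<Rightarrow> 'v \<Rightarrow> bool" where
  "open_adj_avoiding E \<eta> e u v \<longleftrightarrow> {u, v} \<in> E \<and> {u, v} \<noteq> e \<and> \<eta> {u, v} = 1"

definition open_conn_avoiding :: "'v set set \<Rightarrow> ('v set \<Rightarrow> nat) \<Rightarrow> 'v set \<Rightarrow> 'v \<Rightarrow> 'v \<Rightarrow> bool" where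
  "open_conn_avoiding E \<eta> e = (open_adj_avoiding E \<eta> e)\<^sup>*\<^sup>*"

definition gamma :: "'v set set \<Rightarrow> ('v set \<Rightarrow> nat) \<Rightarrow> 'v set \<Rightarrow> bool" where
  "gamma E \<eta> e \<longleftrightarrow> (\<forall>x\<in>e. \<forall>y\<in>e. open_conn_avoiding E \<eta> e x y)"

definition flip_cluster ::
  "'v set \<Rightarrow> 'v set set \<Rightarrow> ('v set \<Rightarrow> nat) \<Rightarrow> 'v set \<Rightarrow> 'v \<Rightarrow> ('v \<Rightarrow> int) \<Rightarrow> ('v \<Rightarrow> int)" where
  "flip_cluster V E \<eta> e x \<sigma> =
     restrict (\<lambda>y. if open_conn_avoiding E \<eta> e x y then - \<sigma> y else \<sigma> y) V"

definition base_rate :: "real \<Rightarrow> ('v set \<Rightarrow> nat) \<Rightarrow> 'v set \<Rightarrow> real" where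
  "base_rate p \<eta> e = (1 - p) * (if \<eta> e = 1 then 1 else 0) + p * (if \<eta> e = 0 then 1 else 0)"

definition ind :: "bool \<Rightarrow> real" where
  "ind b = (if b then 1 else 0)"

text \<open>The edge e (and vertex x) witnessing each case
  are unique whenever they exist, so choosing them with SOME is harmless. Diagonal rates are
  not specified by the paper; we set them to 0 (they play no role below).\<close>
definition rate ::
  "real \<Rightarrow> 'v set \<Rightarrow> 'v set set \<Rightarrow> ('v set \<Rightarrow> nat) \<times> ('v \<Rightarrow> int) \<Rightarrow> ('v set \<Rightarrow> nat) \<times> ('v \<Rightarrow> int) \<Rightarrow> real"
where
  "rate p V E s s' =
    (let (\<eta>, \<sigma>) = s; (\<eta>', \<sigma>') = s' in
     if s = s' then 0
     else if \<exists>e\<in>E. \<sigma>' = \<sigma> \<and> \<eta>' = flip_edge \<eta> e \<and> gamma E \<eta> e then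
       (let e = (SOME e. e \<in> E \<and> \<sigma>' = \<sigma> \<and> \<eta>' = flip_edge \<eta> e \<and> gamma E \<eta> e) in
         base_rate p \<eta> e * ind (compatible E \<eta> \<sigma>))
     else if \<exists>e\<in>E. \<sigma>' = \<sigma> \<and> \<eta>' = flip_edge \<eta> e \<and> \<not> gamma E \<eta> e \<and> delta \<sigma> e = 1 then
       (let e = (SOME e. e \<in> E \<and> \<sigma>' = \<sigma> \<and> \<eta>' = flip_edge \<eta> e \<and> \<not> gamma E \<eta> e \<and> delta \<sigma> e = 1) in
         1/2 * base_rate p \<eta> e * ind (compatible E \<eta> \<sigma>))
     else if \<exists>x\<in>V. \<exists>e\<in>E. x \<in> e \<and> \<eta>' = flip_edge \<eta> e \<and> \<not> gamma E \<eta> e \<and> \<eta> e = delta \<sigma> e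
                        \<and> \<sigma>' = flip_cluster V E \<eta> e x \<sigma> then
       (let e = (SOME e. \<exists>x\<in>V. e \<in> E \<and> x \<in> e \<and> \<eta>' = flip_edge \<eta> e \<and> \<not> gamma E \<eta> e
                        \<and> \<eta> e = delta \<sigma> e \<and> \<sigma>' = flip_cluster V E \<eta> e x \<sigma>) in
         1/4 * ((1 - p) * ind (\<eta> e = 1) * ind (compatible E \<eta> \<sigma>)
                + p * ind (\<eta> e = 0) * ind (compatible E \<eta>' \<sigma>')))
     else 0)"

end

theory Submission
  imports Defs
begin

(* Flipping distinct edges gives distinct configurations, so only the rates (a)-(c) at the edge e
   itself contribute. If gamma_eta(e) = 1, only sigma' = sigma has positive rate. Otherwise the
   endpoints x, y of e lie in distinct open clusters avoiding e, and besides sigma only the two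
   distinct cluster flips sigma^x, sigma^y can receive positive rate. If eta(e) = 1, compatibility
   forces delta_sigma(e) = 1 and the total is (1-p)/2 + 2 (1-p)/4. If eta(e) = 0 and
   delta_sigma(e) = 1, only (b) contributes, namely p/2. If eta(e) = 0 and delta_sigma(e) = 0, each
   cluster flip makes the spins on e agree while keeping every other open edge satisfied (a
   cluster is closed under open edges other than e), so both are compatible with eta^e and the
   total is 2 p/4. *)

lemma flip_edge_neq: "flip_edge \<eta> e \<noteq> \<eta>"
proof
  assume "flip_edge \<eta> e = \<eta>"
  then have "1 - \<eta> e = \<eta> e" by (metis flip_edge_def fun_upd_same)
  then show False by arith
qed

lemma flip_edge_eq_flip_edge_iff: "flip_edge \<eta> e = flip_edge \<eta> e' \<longleftrightarrow> e = e'"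
proof
  assume eq: "flip_edge \<eta> e = flip_edge \<eta> e'"
  show "e = e'"
  proof (rule ccontr)
    assume "e \<noteq> e'"
    then have "\<eta> e = 1 - \<eta> e"
      using fun_cong[OF eq, of e] by (simp add: flip_edge_def)
    then show False by arith
  qed
qed simp

lemma symp_open_adj_avoiding: "symp (open_adj_avoiding E \<eta> e)"
  by (auto simp: symp_def open_adj_avoiding_def insert_commute)

lemma open_conn_avoiding_refl [simp]: "open_conn_avoiding E \<eta> e x x"
  by (simp add: open_conn_avoiding_def)

lemma open_conn_avoiding_sym:
  "open_conn_avoiding E \<eta> e u v \<Longrightarrow> open_conn_avoiding E \<eta> e v u"
  unfolding open_conn_avoiding_def by (rule sympD[OF symp_rtranclp[OF symp_open_adj_avoiding]])

lemma open_conn_avoiding_open_edge_iff: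
  assumes "open_adj_avoiding E \<eta> e u v"
  shows "open_conn_avoiding E \<eta> e x u \<longleftrightarrow> open_conn_avoiding E \<eta> e x v"
proof -
  have uv: "open_conn_avoiding E \<eta> e u v"
    using assms unfolding open_conn_avoiding_def by blast
  then have "open_conn_avoiding E \<eta> e v u" by (rule open_conn_avoiding_sym)
  with uv show ?thesis
    unfolding open_conn_avoiding_def by (meson rtranclp_trans)
qed

lemma gamma_iff_open_conn_avoiding:
  assumes "e = {x, y}"
  shows "gamma E \<eta> e \<longleftrightarrow> open_conn_avoiding E \<eta> e x y"
  using assms unfolding gamma_def by (auto intro: open_conn_avoiding_sym)

lemma rate_flip_edge:
  assumes "e \<in> E"
  shows "rate p V E (\<eta>, \<sigma>) (flip_edge \<eta> e, \<sigma>') =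
    (if \<sigma>' = \<sigma> \<and> gamma E \<eta> e then base_rate p \<eta> e * ind (compatible E \<eta> \<sigma>)
     else if \<sigma>' = \<sigma> \<and> \<not> gamma E \<eta> e \<and> delta \<sigma> e = 1
       then 1/2 * base_rate p \<eta> e * ind (compatible E \<eta> \<sigma>)
     else if \<not> gamma E \<eta> e \<and> \<eta> e = delta \<sigma> e
             \<and> (\<exists>x\<in>V. x \<in> e \<and> \<sigma>' = flip_cluster V E \<eta> e x \<sigma>)
       then 1/4 * ((1 - p) * ind (\<eta> e = 1) * ind (compatible E \<eta> \<sigma>)
                 + p * ind (\<eta> e = 0) * ind (compatible E (flip_edge \<eta> e) \<sigma>'))
     else 0)"
proof -
  have "(SOME e'. e' \<in> E \<and> \<sigma>' = \<sigma> \<and> flip_edge \<eta> e = flip_edge \<eta> e' \<and> gamma E \<eta> e') = e"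
    if "\<sigma>' = \<sigma>" "gamma E \<eta> e"
    using that assms by (intro some_equality) (auto simp: flip_edge_eq_flip_edge_iff)
  moreover have "(SOME e'. e' \<in> E \<and> \<sigma>' = \<sigma> \<and> flip_edge \<eta> e = flip_edge \<eta> e' \<and> \<not> gamma E \<eta> e'
                    \<and> delta \<sigma> e' = 1) = e"
    if "\<sigma>' = \<sigma>" "\<not> gamma E \<eta> e" "delta \<sigma> e = 1"
    using that assms by (intro some_equality) (auto simp: flip_edge_eq_flip_edge_iff)
  moreover have "(SOME e'. \<exists>x\<in>V. e' \<in> E \<and> x \<in> e' \<and> flip_edge \<eta> e = flip_edge \<eta> e'
                    \<and> \<not> gamma E \<eta> e' \<and> \<eta> e' = delta \<sigma> e' \<and> \<sigma>' = flip_cluster V E \<eta> e' x \<sigma>) = e"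
    if "\<exists>x\<in>V. x \<in> e \<and> \<not> gamma E \<eta> e \<and> \<eta> e = delta \<sigma> e
          \<and> \<sigma>' = flip_cluster V E \<eta> e x \<sigma>"
    using that assms by (intro some_equality) (auto simp: flip_edge_eq_flip_edge_iff)
  ultimately show ?thesis
    using assms flip_edge_neq[of \<eta> e]
    unfolding rate_def by (auto simp: Let_def flip_edge_eq_flip_edge_iff)
qed

lemma flip_cluster_in_spin_configs:
  "\<sigma> \<in> spin_configs V \<Longrightarrow> flip_cluster V E \<eta> e x \<sigma> \<in> spin_configs V"
  unfolding spin_configs_def flip_cluster_def by (auto simp: PiE_iff)

lemma flip_cluster_apply:
  "z \<in> V \<Longrightarrow> flip_cluster V E \<eta> e x \<sigma> z =
     (if open_conn_avoiding E \<eta> e x z then - \<sigma> z else \<sigma> z)"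
  unfolding flip_cluster_def by simp

lemma spin_configs_values: "\<sigma> \<in> spin_configs V \<Longrightarrow> x \<in> V \<Longrightarrow> \<sigma> x \<in> {-1, 1}"
  unfolding spin_configs_def by (rule PiE_mem)

lemma flip_cluster_neq:
  assumes "\<sigma> \<in> spin_configs V" "x \<in> V"
  shows "flip_cluster V E \<eta> e x \<sigma> \<noteq> \<sigma>"
proof -
  have "\<sigma> x \<noteq> 0" using spin_configs_values[OF assms] by auto
  then have "flip_cluster V E \<eta> e x \<sigma> x \<noteq> \<sigma> x"
    using assms(2) by (simp add: flip_cluster_apply)
  then show ?thesis by metis
qed

lemma delta_flip_cluster_open_edge:
  assumes "f \<in> E" "f \<noteq> e" "\<eta> f = 1" "f \<subseteq> V" "card f = 2" "delta \<sigma> f = 1"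
  shows "delta (flip_cluster V E \<eta> e x \<sigma>) f = 1"
proof -
  obtain u v where f: "f = {u, v}" using assms(5) by (meson card_2_iff)
  have "open_adj_avoiding E \<eta> e u v" using assms f unfolding open_adj_avoiding_def by simp
  then have "open_conn_avoiding E \<eta> e x u \<longleftrightarrow> open_conn_avoiding E \<eta> e x v"
    by (rule open_conn_avoiding_open_edge_iff)
  moreover have "\<sigma> u = \<sigma> v" using assms(6) f by (simp add: delta_def split: if_splits)
  moreover have "u \<in> V" "v \<in> V" using assms(4) f by auto
  ultimately have "flip_cluster V E \<eta> e x \<sigma> u = flip_cluster V E \<eta> e x \<sigma> v"
    by (simp add: flip_cluster_apply)
  then show ?thesis using f by (simp add: delta_def)
qed

lemma compatible_flip_edge_flip_cluster:
  assumes "simple_graph V E" "\<sigma> \<in> spin_configs V" "compatible E \<eta> \<sigma>"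
    and "e \<in> E" "\<not> gamma E \<eta> e" "\<eta> e = 0" "delta \<sigma> e = 0" "z \<in> e"
  shows "compatible E (flip_edge \<eta> e) (flip_cluster V E \<eta> e z \<sigma>)"
  unfolding compatible_def
proof
  fix f assume f: "f \<in> E"
  let ?\<tau> = "flip_cluster V E \<eta> e z \<sigma>"
  have f_graph: "f \<subseteq> V" "card f = 2" using assms(1) f by (auto simp: simple_graph_def)
  have delta_le: "\<eta> f \<le> delta \<sigma> f" "delta \<sigma> f \<le> 1"
    using assms(3) f by (auto simp: compatible_def delta_def)
  show "flip_edge \<eta> e f \<le> delta ?\<tau> f"
  proof (cases "f = e")
    case True
    obtain u v where "e = {u, v}" using f_graph True by (meson card_2_iff)
    then obtain w where e: "e = {z, w}"
      using assms(8) by (cases "z = u") (auto simp: insert_commute)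
    have zw: "z \<in> V" "w \<in> V" using f_graph True e by auto
    have "\<sigma> z \<noteq> \<sigma> w" using assms(7) e by (auto simp: delta_def split: if_splits)
    then have "\<sigma> w = - \<sigma> z"
      using spin_configs_values[OF assms(2) zw(1)] spin_configs_values[OF assms(2) zw(2)] by auto
    moreover have "\<not> open_conn_avoiding E \<eta> e z w"
      using assms(5) gamma_iff_open_conn_avoiding[OF e] by simp
    ultimately have "?\<tau> z = ?\<tau> w" using zw by (simp add: flip_cluster_apply)
    then show ?thesis using True e assms(6) by (auto simp: delta_def flip_edge_def)
  next
    case f_ne: False
    then have "flip_edge \<eta> e f = \<eta> f" by (simp add: flip_edge_def)
    show ?thesis
    proof (cases "\<eta> f = 1")
      case True
      then have "delta \<sigma> f = 1" using delta_le by linarith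
      then have "delta ?\<tau> f = 1"
        by (rule delta_flip_cluster_open_edge[where \<eta> = \<eta>, OF f f_ne True f_graph])
      then show ?thesis using \<open>flip_edge \<eta> e f = \<eta> f\<close> True by simp
    next
      case False
      then show ?thesis using delta_le \<open>flip_edge \<eta> e f = \<eta> f\<close> by linarith
    qed
  qed
qed

lemma finite_spin_configs: "finite V \<Longrightarrow> finite (spin_configs V)"
  unfolding spin_configs_def by (simp add: finite_PiE)

lemma sum_rate_flip_edge_gamma:
  assumes "finite V" "\<sigma> \<in> spin_configs V" "e \<in> E" "gamma E \<eta> e"
  shows "(\<Sum>\<sigma>'\<in>spin_configs V. rate p V E (\<eta>, \<sigma>) (flip_edge \<eta> e, \<sigma>'))
           = base_rate p \<eta> e * ind (compatible E \<eta> \<sigma>)"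
proof -
  have "rate p V E (\<eta>, \<sigma>) (flip_edge \<eta> e, \<sigma>')
          = (if \<sigma>' = \<sigma> then base_rate p \<eta> e * ind (compatible E \<eta> \<sigma>) else 0)" for \<sigma>'
    using assms(3,4) by (simp add: rate_flip_edge)
  then show ?thesis using assms(1,2) by (simp add: finite_spin_configs)
qed

lemma sum_rate_flip_edge_not_gamma:
  assumes "simple_graph V E" "\<sigma> \<in> spin_configs V" "e \<in> E" "e = {x, y}" "\<not> gamma E \<eta> e"
  shows "(\<Sum>\<sigma>'\<in>spin_configs V. rate p V E (\<eta>, \<sigma>) (flip_edge \<eta> e, \<sigma>'))
           = rate p V E (\<eta>, \<sigma>) (flip_edge \<eta> e, \<sigma>)
             + rate p V E (\<eta>, \<sigma>) (flip_edge \<eta> e, flip_cluster V E \<eta> e x \<sigma>)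
             + rate p V E (\<eta>, \<sigma>) (flip_edge \<eta> e, flip_cluster V E \<eta> e y \<sigma>)"
proof -
  let ?R = "\<lambda>\<sigma>'. rate p V E (\<eta>, \<sigma>) (flip_edge \<eta> e, \<sigma>')"
  let ?a = "flip_cluster V E \<eta> e x \<sigma>" and ?b = "flip_cluster V E \<eta> e y \<sigma>"
  have xy: "x \<in> V" "y \<in> V" using assms(1,3,4) by (auto simp: simple_graph_def)
  have "\<not> open_conn_avoiding E \<eta> e y x"
    using assms(4,5) gamma_iff_open_conn_avoiding[of e y x] by (simp add: insert_commute)
  then have "?a x \<noteq> ?b x"
    using xy spin_configs_values[OF assms(2) xy(1)] by (auto simp: flip_cluster_apply)
  then have distinct: "?a \<noteq> \<sigma>" "?b \<noteq> \<sigma>" "?a \<noteq> ?b"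
    using flip_cluster_neq[OF assms(2)] xy by metis+
  have "?R \<sigma>' = 0" if "\<sigma>' \<notin> {\<sigma>, ?a, ?b}" for \<sigma>'
    using that assms(3,4) by (auto simp: rate_flip_edge)
  then have "sum ?R (spin_configs V) = sum ?R {\<sigma>, ?a, ?b}"
    using assms(1,2) flip_cluster_in_spin_configs[OF assms(2)]
    by (intro sum.mono_neutral_right) (auto simp: simple_graph_def finite_spin_configs)
  also have "\<dots> = ?R \<sigma> + ?R ?a + ?R ?b"
    using distinct by (simp add: add.assoc)
  finally show ?thesis .
qed

lemma rate_flip_edge_same_spins_not_gamma:
  assumes "\<sigma> \<in> spin_configs V" "e \<in> E" "e \<subseteq> V" "\<not> gamma E \<eta> e"
  shows "rate p V E (\<eta>, \<sigma>) (flip_edge \<eta> e, \<sigma>)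
           = (if delta \<sigma> e = 1 then 1/2 * base_rate p \<eta> e * ind (compatible E \<eta> \<sigma>) else 0)"
proof -
  have "\<not> (\<exists>x\<in>V. x \<in> e \<and> \<sigma> = flip_cluster V E \<eta> e x \<sigma>)"
    using flip_cluster_neq[OF assms(1)] by metis
  then show ?thesis using assms(2,4) by (simp only: rate_flip_edge) simp
qed

lemma rate_flip_edge_flip_cluster:
  assumes "\<sigma> \<in> spin_configs V" "e \<in> E" "z \<in> V" "z \<in> e" "\<not> gamma E \<eta> e"
  shows "rate p V E (\<eta>, \<sigma>) (flip_edge \<eta> e, flip_cluster V E \<eta> e z \<sigma>)
           = (if \<eta> e = delta \<sigma> e
              then 1/4 * ((1 - p) * ind (\<eta> e = 1) * ind (compatible E \<eta> \<sigma>)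
                + p * ind (\<eta> e = 0) * ind (compatible E (flip_edge \<eta> e) (flip_cluster V E \<eta> e z \<sigma>)))
              else 0)"
proof -
  have "flip_cluster V E \<eta> e z \<sigma> \<noteq> \<sigma>" using flip_cluster_neq[OF assms(1,3)] .
  moreover have "\<exists>x\<in>V. x \<in> e \<and> flip_cluster V E \<eta> e z \<sigma> = flip_cluster V E \<eta> e x \<sigma>"
    using assms(3,4) by blast
  ultimately show ?thesis using assms(2,5) by (simp add: rate_flip_edge)
qed

lemma sum_rate_flip_edge_not_gamma_open:
  assumes "simple_graph V E" "\<sigma> \<in> spin_configs V" "compatible E \<eta> \<sigma>"
    and "e \<in> E" "\<not> gamma E \<eta> e" "\<eta> e = 1"
  shows "(\<Sum>\<sigma>'\<in>spin_configs V. rate p V E (\<eta>, \<sigma>) (flip_edge \<eta> e, \<sigma>')) = 1 - p"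
proof -
  have e: "e \<subseteq> V" "card e = 2" using assms(1,4) by (auto simp: simple_graph_def)
  then obtain x y where xy: "e = {x, y}" by (meson card_2_iff)
  have "\<eta> e \<le> delta \<sigma> e" "delta \<sigma> e \<le> 1"
    using assms(3,4) by (simp_all add: compatible_def delta_def)
  then have delta: "delta \<sigma> e = 1" using assms(6) by linarith
  have rate_\<sigma>: "rate p V E (\<eta>, \<sigma>) (flip_edge \<eta> e, \<sigma>) = (1 - p) / 2"
    using rate_flip_edge_same_spins_not_gamma[OF assms(2,4) e(1) assms(5)] delta assms(3,6)
    by (simp add: base_rate_def ind_def)
  have rate_cluster: "rate p V E (\<eta>, \<sigma>) (flip_edge \<eta> e, flip_cluster V E \<eta> e z \<sigma>) = (1 - p) / 4"
    if "z \<in> e" for z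
    using rate_flip_edge_flip_cluster[OF assms(2,4) _ that assms(5)] that e(1) delta assms(3,6)
    by (auto simp: ind_def)
  have "x \<in> e" "y \<in> e" using xy by auto
  have "(\<Sum>\<sigma>'\<in>spin_configs V. rate p V E (\<eta>, \<sigma>) (flip_edge \<eta> e, \<sigma>'))
          = (1 - p) / 2 + (1 - p) / 4 + (1 - p) / 4"
    using \<open>x \<in> e\<close> \<open>y \<in> e\<close>
    by (simp only: sum_rate_flip_edge_not_gamma[OF assms(1,2,4) xy assms(5)] rate_\<sigma> rate_cluster)
  also have "\<dots> = 1 - p" by (simp add: field_simps)
  finally show ?thesis .
qed

lemma sum_rate_flip_edge_not_gamma_closed:
  assumes "simple_graph V E" "\<sigma> \<in> spin_configs V" "compatible E \<eta> \<sigma>"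
    and "e \<in> E" "\<not> gamma E \<eta> e" "\<eta> e = 0"
  shows "(\<Sum>\<sigma>'\<in>spin_configs V. rate p V E (\<eta>, \<sigma>) (flip_edge \<eta> e, \<sigma>')) = p / 2"
proof -
  have e: "e \<subseteq> V" "card e = 2" using assms(1,4) by (auto simp: simple_graph_def)
  then obtain x y where xy: "e = {x, y}" by (meson card_2_iff)
  then have "x \<in> e" "y \<in> e" by auto
  note sum_rates = sum_rate_flip_edge_not_gamma[OF assms(1,2,4) xy assms(5)]
  note rate_\<sigma> = rate_flip_edge_same_spins_not_gamma[OF assms(2,4) e(1) assms(5)]
  note rate_cluster = rate_flip_edge_flip_cluster[OF assms(2,4) _ _ assms(5)]
  have "delta \<sigma> e \<le> 1" by (simp add: delta_def)
  then consider (agree) "delta \<sigma> e = 1" | (disagree) "delta \<sigma> e = 0" by linarith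
  then show ?thesis
  proof cases
    case agree
    have "rate p V E (\<eta>, \<sigma>) (flip_edge \<eta> e, \<sigma>) = p / 2"
      using rate_\<sigma> agree assms(3,6) by (simp add: base_rate_def ind_def)
    moreover have "rate p V E (\<eta>, \<sigma>) (flip_edge \<eta> e, flip_cluster V E \<eta> e z \<sigma>) = 0"
      if "z \<in> e" for z
      using rate_cluster[OF _ that] that e(1) agree assms(6) by auto
    ultimately show ?thesis
      using \<open>x \<in> e\<close> \<open>y \<in> e\<close> by (simp only: sum_rates)
  next
    case disagree
    have "rate p V E (\<eta>, \<sigma>) (flip_edge \<eta> e, \<sigma>) = 0"
      using rate_\<sigma> disagree by simp
    moreover have "rate p V E (\<eta>, \<sigma>) (flip_edge \<eta> e, flip_cluster V E \<eta> e z \<sigma>) = p / 4"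
      if "z \<in> e" for z
      using rate_cluster[OF _ that] that e(1) disagree assms(6)
        compatible_flip_edge_flip_cluster[OF assms(1-6) disagree that]
      by (auto simp: ind_def)
    ultimately show ?thesis
      using \<open>x \<in> e\<close> \<open>y \<in> e\<close> by (simp only: sum_rates)
  qed
qed

theorem proposition8:
  fixes V :: "'v set" and E :: "'v set set" and p :: real
    and \<eta> :: "'v set \<Rightarrow> nat" and \<sigma> :: "'v \<Rightarrow> int" and e :: "'v set"
  assumes "simple_graph V E"
    and "0 \<le> p" and "p \<le> 1"
    and "\<eta> \<in> edge_configs E" and "\<sigma> \<in> spin_configs V"
    and "e \<in> E"
    and "compatible E \<eta> \<sigma>"
  shows "(gamma E \<eta> e \<longrightarrow>
           (\<Sum>\<sigma>'\<in>spin_configs V. rate p V E (\<eta>, \<sigma>) (flip_edge \<eta> e, \<sigma>'))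
             = p * ind (\<eta> e = 0) + (1 - p) * ind (\<eta> e = 1))
       \<and> (\<not> gamma E \<eta> e \<and> \<eta> e = 0 \<longrightarrow>
           (\<Sum>\<sigma>'\<in>spin_configs V. rate p V E (\<eta>, \<sigma>) (flip_edge \<eta> e, \<sigma>')) = p / 2)
       \<and> (\<not> gamma E \<eta> e \<and> \<eta> e = 1 \<longrightarrow>
           (\<Sum>\<sigma>'\<in>spin_configs V. rate p V E (\<eta>, \<sigma>) (flip_edge \<eta> e, \<sigma>')) = 1 - p)"
proof -
  have "finite V" using assms(1) by (simp add: simple_graph_def)
  have "\<eta> e \<in> {0, 1}" using assms(4,6) by (auto simp: edge_configs_def)
  have "base_rate p \<eta> e = p * ind (\<eta> e = 0) + (1 - p) * ind (\<eta> e = 1)"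
    using \<open>\<eta> e \<in> {0, 1}\<close> by (auto simp: base_rate_def ind_def)
  then show ?thesis
    using sum_rate_flip_edge_gamma[OF \<open>finite V\<close> assms(5,6)] assms(7)
      sum_rate_flip_edge_not_gamma_closed[OF assms(1,5,7,6)]
      sum_rate_flip_edge_not_gamma_open[OF assms(1,5,7,6)]
    by (simp add: ind_def)
qed

end
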